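(* Let $d\ge 2$, let $\mu\in\mathbb{T}^{d-1}$ with $(1,\mu)$ rationally independent, and let $\mathcal{A}\in C^\omega(\mathbb{T}^{d-1},SL(2,\mathbb{R}))$. Suppose that $(\mu,\mathcal{A})$ is analytically conjugated to a cocycle $(\mu,\widetilde{\mathcal{A}})$, i.e. there is $B\in C^\omega(2\mathbb{T}^{d-1},SL(2,\mathbb{R}))$ with $B(\widetilde\theta+\mu)\mathcal{A}(\widetilde\theta)B(\widetilde\theta)^{-1}=\widetilde{\mathcal{A}}(\widetilde\theta)$, and that $(\mu,\widetilde{\mathcal{A}})$ can be embedded into an analytic quasi-periodic linear system. Then $(\mu,\mathcal{A})$ can also be embedded into an analytic quasi-periodic linear system.
   Context: $\mathbb{T}=\mathbb{R}/\mathbb{Z}$ and $2\mathbb{T}=\mathbb{R}/2\mathbb{Z}$; conjugacies are allowed to be defined on $2\mathbb{T}^{m}=(\mathbb{R}/2\mathbb{Z})^m$. The cocycle $(\mu,\mathcal{A})$ is the map $(\widetilde\theta,v)\mapsto(\widetilde\theta+\mu,\mathcal{A}(\widetilde\theta)v)$. A cocycle $(\mu,\mathcal{A})$ "can be embedded into an analytic quasi-periodic linear system" if there is a real-analytic $A:2\mathbb{T}^d\to sl(2,\mathbb{R})$ (equivalently an analytic flow $\Phi^t(\theta)\in SL(2,\mathbb{R})$, $\theta\in 2\mathbb{T}^d$, of $\dot x=A(\theta)x$, $\dot\theta=\omega=(1,\mu)$, with $\Phi^0=I$ and $\Phi^{t+s}(\theta)=\Phi^t(\theta+s\omega)\Phi^s(\theta)$)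 such that the Poincaré map satisfies $\Phi^1(0,\widetilde\theta)=\mathcal{A}(\widetilde\theta)$ for all $\widetilde\theta$. *)

theory Defs
  imports "HOL-Analysis.Analysis"
begin

text \<open>Real analyticity of a scalar function on a Euclidean space: near every point it is
the sum of an (unconditionally, hence absolutely) convergent power series in the coordinates
with respect to the standard basis.\<close>
definition real_analytic_at :: "('a::euclidean_space \<Rightarrow> real) \<Rightarrow> 'a \<Rightarrow> bool" where
  "real_analytic_at f x \<longleftrightarrow>
     (\<exists>r>0. \<exists>c :: ('a \<Rightarrow> nat) \<Rightarrow> real. \<forall>y\<in>ball x r.
        ((\<lambda>\<alpha>. c \<alpha> * (\<Prod>b\<in>Basis. ((y - x) \<bullet> b) ^ \<alpha> b))
           has_sum f y) {\<alpha>. \<forall>b. b \<notin> Basis \<longrightarrow> \<alpha> b = 0})"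

definition real_analytic :: "('a::euclidean_space \<Rightarrow> real) \<Rightarrow> bool" where
  "real_analytic f \<longleftrightarrow> (\<forall>x. real_analytic_at f x)"

definition analytic_mat :: "('a::euclidean_space \<Rightarrow> real^2^2) \<Rightarrow> bool" where
  "analytic_mat F \<longleftrightarrow> (\<forall>i j. real_analytic (\<lambda>x. F x $ i $ j))"

text \<open>Periodicity with period p in every coordinate direction: a map defined on
(R / pZ)^m, lifted to R^m.\<close>
definition periodic_coord :: "real \<Rightarrow> ('a::euclidean_space \<Rightarrow> 'b) \<Rightarrow> bool" where
  "periodic_coord p F \<longleftrightarrow> (\<forall>x. \<forall>b\<in>Basis. F (x + p *\<^sub>R b) = F x)"

definition trace2 :: "real^2^2 \<Rightarrow> real" where
  "trace2 M = M $ 1 $ 1 + M $ 2 $ 2"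

definition rat_indep_1 :: "real^'n \<Rightarrow> bool" where
  "rat_indep_1 \<mu> \<longleftrightarrow> (\<forall>(k0::int) (k::'n \<Rightarrow> int).
      real_of_int k0 + (\<Sum>i\<in>UNIV. real_of_int (k i) * \<mu> $ i) = 0 \<longrightarrow> k0 = 0 \<and> (\<forall>i. k i = 0))"

text \<open>The cocycle (mu, F) can be embedded into an analytic quasi-periodic linear system:
there is an analytic A on 2T^d (points written (theta_0, theta~) in R x R^(d-1), 2-periodic in
every coordinate) with values in sl(2,R), whose fundamental solution Phi^t(theta) of
x' = A(theta + t omega) x, omega = (1, mu), Phi^0 = I, has Poincare map
Phi^1(0, theta~) = F(theta~).\<close>
definition embeddable :: "real^'n \<Rightarrow> (real^'n \<Rightarrow> real^2^2) \<Rightarrow> bool" where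
  "embeddable \<mu> F \<longleftrightarrow>
     (\<exists>A :: real \<times> (real^'n) \<Rightarrow> real^2^2.
        analytic_mat A \<and> periodic_coord 2 A \<and> (\<forall>\<theta>. trace2 (A \<theta>) = 0) \<and>
        (\<exists>\<Phi> :: real \<Rightarrow> real \<times> (real^'n) \<Rightarrow> real^2^2.
           (\<forall>\<theta>. \<Phi> 0 \<theta> = mat 1) \<and>
           (\<forall>\<theta> t. ((\<lambda>s. \<Phi> s \<theta>) has_vector_derivative
                      (A (\<theta> + t *\<^sub>R (1, \<mu>)) ** \<Phi> t \<theta>)) (at t)) \<and>
           (\<forall>\<theta>'. \<Phi> 1 (0, \<theta>') = F \<theta>')))"

end

theory Submission
  imports Defs
begin

text \<open>Conjugation by \<open>B\<close> is a gauge transformation. Write \<open>\<theta> = (\<theta>\<^sub>0, \<theta>')\<close>. If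
  \<open>\<Phi>'\<close> is the fundamental solution for the generator \<open>A'\<close> of the system embedding
  \<open>\<A>'\<close>, then \<open>\<Phi>\<^sup>t(\<theta>) = B(\<theta>' + t\<mu>)\<inverse> \<Phi>'\<^sup>t(\<theta>) B(\<theta>')\<close> is the fundamental solution for
  \<open>A(\<theta>) = adj (\<partial>\<^sub>\<mu>B(\<theta>')) B(\<theta>') + B(\<theta>')\<inverse> A'(\<theta>) B(\<theta>')\<close>, where \<open>B\<inverse> = adj B\<close> since
  \<open>det B = 1\<close>, and its Poincare map is \<open>B(\<theta>' + \<mu>)\<inverse> \<A>'(\<theta>') B(\<theta>') = \<A>(\<theta>')\<close>.
  The generator \<open>A\<close> is 2-periodic because \<open>B\<close> is, trace free because
  \<open>tr (adj (\<partial>\<^sub>\<mu>B) B) = \<partial>\<^sub>\<mu> det B = 0\<close>, and analytic because real analytic functions,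
  defined by local power series, are closed under sums, products, composition with a projection
  and directional derivatives.\<close>

section \<open>Power series in several real variables\<close>

definition multi_indices :: "('a::euclidean_space \<Rightarrow> nat) set" where
  "multi_indices = {\<alpha>. \<forall>b. b \<notin> Basis \<longrightarrow> \<alpha> b = 0}"

definition monomial :: "('a::euclidean_space \<Rightarrow> nat) \<Rightarrow> 'a \<Rightarrow> real" where
  "monomial \<alpha> h = (\<Prod>b\<in>Basis. (h \<bullet> b) ^ \<alpha> b)"

definition total_degree :: "('a::euclidean_space \<Rightarrow> nat) \<Rightarrow> nat" where
  "total_degree \<alpha> = (\<Sum>b\<in>Basis. \<alpha> b)"

definition polydisc :: "real \<Rightarrow> 'a::euclidean_space set" where
  "polydisc s = {h. \<forall>b\<in>Basis. \<bar>h \<bullet> b\<bar> \<le> s}"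

definition power_series_expansion ::
    "('a::euclidean_space \<Rightarrow> real) \<Rightarrow> 'a \<Rightarrow> real \<Rightarrow> (('a \<Rightarrow> nat) \<Rightarrow> real) \<Rightarrow> bool" where
  "power_series_expansion f x s c \<longleftrightarrow>
     0 < s \<and> (\<forall>h\<in>polydisc s. ((\<lambda>\<alpha>. c \<alpha> * monomial \<alpha> h) has_sum f (x + h)) multi_indices)"

lemma power_series_expansionD:
  assumes "power_series_expansion f x s c"
  shows "0 < s" and "h \<in> polydisc s \<Longrightarrow> ((\<lambda>\<alpha>. c \<alpha> * monomial \<alpha> h) has_sum f (x + h)) multi_indices"
  using assms unfolding power_series_expansion_def by auto

lemma polydisc_mono: "h \<in> polydisc s \<Longrightarrow> s \<le> s' \<Longrightarrow> h \<in> polydisc s'"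
  unfolding polydisc_def by (auto intro: order_trans)

lemma zero_in_polydisc: "0 \<le> s \<Longrightarrow> 0 \<in> polydisc s"
  by (simp add: polydisc_def)

lemma abs_monomial_le: "h \<in> polydisc s \<Longrightarrow> \<bar>monomial \<alpha> h\<bar> \<le> s ^ total_degree \<alpha>"
proof -
  assume h: "h \<in> polydisc s"
  have "\<bar>monomial \<alpha> h\<bar> = (\<Prod>b\<in>Basis. \<bar>h \<bullet> b\<bar> ^ \<alpha> b)"
    by (simp add: monomial_def abs_prod power_abs)
  also have "\<dots> \<le> (\<Prod>b\<in>Basis. s ^ \<alpha> b)"
    using h by (intro prod_mono) (auto simp: polydisc_def intro!: power_mono)
  also have "\<dots> = s ^ total_degree \<alpha>" by (simp add: total_degree_def power_sum)
  finally show ?thesis .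
qed

lemma monomial_add: "monomial (\<lambda>b. \<alpha> b + \<beta> b) h = monomial \<alpha> h * monomial \<beta> h"
  by (simp add: monomial_def power_add prod.distrib)

text \<open>Evaluate at the corner \<open>(s, \<dots>, s)\<close> of the polydisc, where every monomial is
  \<open>s ^ total_degree \<alpha>\<close>; unconditional convergence of a real series is absolute.\<close>
lemma power_series_abs_summable:
  assumes "power_series_expansion f x s c"
  shows "(\<lambda>\<alpha>. \<bar>c \<alpha>\<bar> * s ^ total_degree \<alpha>) summable_on multi_indices"
proof -
  have s: "0 < s" by (rule power_series_expansionD(1)[OF assms])
  define z :: 'a where "z = (\<Sum>b\<in>Basis. s *\<^sub>R b)"
  have z_inner: "z \<bullet> b = s" if "b \<in> Basis" for b
    using that by (simp add: z_def inner_sum_left_Basis)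
  have z: "z \<in> polydisc s" using s by (simp add: polydisc_def z_inner)
  have "monomial \<alpha> z = s ^ total_degree \<alpha>" for \<alpha>
    by (simp add: monomial_def z_inner total_degree_def power_sum)
  moreover have "(\<lambda>\<alpha>. c \<alpha> * monomial \<alpha> z) summable_on multi_indices"
    by (rule has_sum_imp_summable[OF power_series_expansionD(2)[OF assms z]])
  ultimately have "(\<lambda>\<alpha>. c \<alpha> * s ^ total_degree \<alpha>) summable_on multi_indices" by simp
  hence "(\<lambda>\<alpha>. norm (c \<alpha> * s ^ total_degree \<alpha>)) summable_on multi_indices"
    by (rule summable_on_iff_abs_summable_on_real[THEN iffD1])
  thus ?thesis using s by (simp add: abs_mult)
qed

lemma power_series_norm_summable:
  assumes "power_series_expansion f x s c" "h \<in> polydisc s"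
  shows "(\<lambda>\<alpha>. norm (c \<alpha> * monomial \<alpha> h)) summable_on multi_indices"
proof (rule summable_on_comparison_test[OF power_series_abs_summable[OF assms(1)]])
  fix \<alpha>
  have "\<bar>c \<alpha>\<bar> * \<bar>monomial \<alpha> h\<bar> \<le> \<bar>c \<alpha>\<bar> * s ^ total_degree \<alpha>"
    using abs_monomial_le[OF assms(2)] by (rule mult_left_mono) simp
  thus "norm (c \<alpha> * monomial \<alpha> h) \<le> \<bar>c \<alpha>\<bar> * s ^ total_degree \<alpha>"
    by (simp add: abs_mult)
qed simp

lemma power_series_expansion_shrink:
  "power_series_expansion f x s c \<Longrightarrow> 0 < s' \<Longrightarrow> s' \<le> s \<Longrightarrow> power_series_expansion f x s' c"
  unfolding power_series_expansion_def using polydisc_mono by blast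

lemma real_analytic_at_iff_power_series:
  "real_analytic_at f x \<longleftrightarrow> (\<exists>s c. power_series_expansion f x s c)"
proof
  assume "real_analytic_at f x"
  then obtain r c where r: "r > 0" and
    conv: "\<forall>y\<in>ball x r. ((\<lambda>\<alpha>. c \<alpha> * monomial \<alpha> (y - x)) has_sum f y) multi_indices"
    unfolding real_analytic_at_def monomial_def[symmetric] multi_indices_def[symmetric] by blast
  define s where "s = r / (2 * DIM('a))"
  have "power_series_expansion f x s c" unfolding power_series_expansion_def
  proof (intro conjI ballI)
    show "0 < s" using r by (simp add: s_def)
    fix h :: 'a assume h: "h \<in> polydisc s"
    have "norm h \<le> (\<Sum>b\<in>Basis. \<bar>h \<bullet> b\<bar>)" by (rule norm_le_l1)
    also have "\<dots> \<le> (\<Sum>b\<in>(Basis::'a set). s)"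
      using h by (intro sum_mono) (auto simp: polydisc_def)
    also have "\<dots> < r" using r by (simp add: s_def)
    finally have "x + h \<in> ball x r" by (simp add: dist_norm)
    from conv[rule_format, OF this]
    show "((\<lambda>\<alpha>. c \<alpha> * monomial \<alpha> h) has_sum f (x + h)) multi_indices" by simp
  qed
  thus "\<exists>s c. power_series_expansion f x s c" by blast
next
  assume "\<exists>s c. power_series_expansion f x s c"
  then obtain s c where p: "power_series_expansion f x s c" by blast
  show "real_analytic_at f x"
    unfolding real_analytic_at_def monomial_def[symmetric] multi_indices_def[symmetric]
  proof (intro exI conjI ballI)
    show "s > 0" by (rule power_series_expansionD(1)[OF p])
    fix y assume y: "y \<in> ball x s"
    have "\<bar>(y - x) \<bullet> b\<bar> < s" if "b \<in> Basis" for b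
      using Basis_le_norm[OF that, of "y - x"] y by (simp add: dist_norm norm_minus_commute)
    hence "y - x \<in> polydisc s" by (simp add: polydisc_def less_imp_le)
    from power_series_expansionD(2)[OF p this]
    show "((\<lambda>\<alpha>. c \<alpha> * monomial \<alpha> (y - x)) has_sum f y) multi_indices" by simp
  qed
qed

lemma real_analytic_iff_power_series:
  "real_analytic f \<longleftrightarrow> (\<forall>x. \<exists>s c. power_series_expansion f x s c)"
  by (simp add: real_analytic_def real_analytic_at_iff_power_series)

lemma real_analytic_common_radius:
  assumes "real_analytic f" "real_analytic g"
  obtains s c d where "power_series_expansion f x s c" "power_series_expansion g x s d"
proof -
  obtain s c s' d where p: "power_series_expansion f x s c" "power_series_expansion g x s' d"
    using assms by (meson real_analytic_iff_power_series)
  have m: "0 < min s s'" using p by (simp add: power_series_expansionD(1))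
  show thesis
    by (rule that[OF power_series_expansion_shrink[OF p(1) m] power_series_expansion_shrink[OF p(2) m]])
      simp_all
qed

lemma power_series_expansion_add:
  assumes "power_series_expansion f x s c" "power_series_expansion g x s d"
  shows "power_series_expansion (\<lambda>y. f y + g y) x s (\<lambda>\<alpha>. c \<alpha> + d \<alpha>)"
  unfolding power_series_expansion_def
proof (intro conjI ballI)
  show "0 < s" by (rule power_series_expansionD(1)[OF assms(1)])
  fix h :: 'a assume h: "h \<in> polydisc s"
  show "((\<lambda>\<alpha>. (c \<alpha> + d \<alpha>) * monomial \<alpha> h) has_sum f (x + h) + g (x + h)) multi_indices"
    using has_sum_add[OF assms[THEN power_series_expansionD(2), OF h]] by (simp add: distrib_right)
qed

lemma power_series_expansion_cmult:
  assumes "power_series_expansion f x s c"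
  shows "power_series_expansion (\<lambda>y. a * f y) x s (\<lambda>\<alpha>. a * c \<alpha>)"
  unfolding power_series_expansion_def
proof (intro conjI ballI)
  show "0 < s" by (rule power_series_expansionD(1)[OF assms])
  fix h :: 'a assume h: "h \<in> polydisc s"
  show "((\<lambda>\<alpha>. (a * c \<alpha>) * monomial \<alpha> h) has_sum a * f (x + h)) multi_indices"
    using has_sum_cmult_right[OF power_series_expansionD(2)[OF assms h], of a] by (simp add: mult.assoc)
qed

definition splittings :: "('a::euclidean_space \<Rightarrow> nat) \<Rightarrow> (('a \<Rightarrow> nat) \<times> ('a \<Rightarrow> nat)) set" where
  "splittings \<gamma> = {p \<in> multi_indices \<times> multi_indices. (\<lambda>b. fst p b + snd p b) = \<gamma>}"

definition cauchy_coeff ::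
    "(('a::euclidean_space \<Rightarrow> nat) \<Rightarrow> real) \<Rightarrow> (('a \<Rightarrow> nat) \<Rightarrow> real) \<Rightarrow> ('a \<Rightarrow> nat) \<Rightarrow> real" where
  "cauchy_coeff c d \<gamma> = (\<Sum>p\<in>splittings \<gamma>. c (fst p) * d (snd p))"

lemma finite_splittings: "finite (splittings \<gamma>)"
proof -
  let ?below = "{\<alpha>\<in>multi_indices. \<forall>b. \<alpha> b \<le> \<gamma> b}"
  let ?extend = "\<lambda>\<phi>::'a \<Rightarrow> nat. \<lambda>b. if b \<in> Basis then \<phi> b else 0"
  have "?below \<subseteq> ?extend ` (PiE Basis (\<lambda>b. {..\<gamma> b}))"
  proof
    fix \<alpha> assume \<alpha>: "\<alpha> \<in> ?below"
    hence "\<alpha> = ?extend (restrict \<alpha> Basis)"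
      by (auto simp: multi_indices_def fun_eq_iff)
    moreover have "restrict \<alpha> Basis \<in> PiE Basis (\<lambda>b. {..\<gamma> b})"
      using \<alpha> by auto
    ultimately show "\<alpha> \<in> ?extend ` (PiE Basis (\<lambda>b. {..\<gamma> b}))" by blast
  qed
  hence "finite ?below" by (rule finite_subset) (intro finite_imageI finite_PiE; simp)
  moreover have "splittings \<gamma> \<subseteq> ?below \<times> ?below"
    by (auto simp: splittings_def)
  ultimately show ?thesis by (meson finite_SigmaI finite_subset)
qed

lemma has_sum_mult_Times:
  fixes a b :: "'i \<Rightarrow> real"
  assumes "(a has_sum A) I" "(b has_sum B) J"
    and "(\<lambda>i. norm (a i)) summable_on I" "(\<lambda>j. norm (b j)) summable_on J"
  shows "((\<lambda>(i,j). a i * b j) has_sum A * B) (I \<times> J)"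
proof -
  let ?NA = "\<Sum>\<^sub>\<infinity>i\<in>I. norm (a i)" and ?NB = "\<Sum>\<^sub>\<infinity>j\<in>J. norm (b j)"
  have "(\<lambda>(i,j). norm (a i * b j)) summable_on Sigma I (\<lambda>_. J)"
  proof (rule nonneg_bdd_above_summable_on)
    show "bdd_above (sum (\<lambda>(i,j). norm (a i * b j)) ` {F. F \<subseteq> Sigma I (\<lambda>_. J) \<and> finite F})"
    proof (rule bdd_aboveI2)
      fix F assume F: "F \<in> {F. F \<subseteq> Sigma I (\<lambda>_. J) \<and> finite F}"
      have "sum (\<lambda>(i,j). norm (a i * b j)) F \<le> sum (\<lambda>(i,j). norm (a i * b j)) (fst ` F \<times> snd ` F)"
        using F by (intro sum_mono2) (auto, force+)
      also have "\<dots> = (\<Sum>i\<in>fst ` F. norm (a i)) * (\<Sum>j\<in>snd ` F. norm (b j))"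
        by (simp add: sum_product sum.cartesian_product abs_mult case_prod_unfold)
      also have "\<dots> \<le> ?NA * ?NB"
        using F assms(3,4) by (intro mult_mono finite_sum_le_infsum sum_nonneg infsum_nonneg) auto
      finally show "sum (\<lambda>(i,j). norm (a i * b j)) F \<le> ?NA * ?NB" .
    qed
  qed auto
  hence "(\<lambda>p. norm ((\<lambda>(i,j). a i * b j) p)) summable_on I \<times> J"
    by (simp add: case_prod_unfold)
  hence summable: "(\<lambda>(i,j). a i * b j) summable_on Sigma I (\<lambda>_. J)"
    by (rule abs_summable_summable)
  have "\<And>i. i \<in> I \<Longrightarrow> ((\<lambda>j. (\<lambda>(i,j). a i * b j) (i,j)) has_sum a i * B) J"
    using has_sum_cmult_right[OF assms(2)] by simp
  from has_sum_SigmaI[OF this has_sum_cmult_left[OF assms(1)] summable] show ?thesis .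
qed

lemma power_series_expansion_mult:
  assumes "power_series_expansion f x s c" "power_series_expansion g x s d"
  shows "power_series_expansion (\<lambda>y. f y * g y) x s (cauchy_coeff c d)"
  unfolding power_series_expansion_def
proof (intro conjI ballI)
  show "0 < s" by (rule power_series_expansionD(1)[OF assms(1)])
  fix h :: 'a assume h: "h \<in> polydisc s"
  let ?term = "\<lambda>(\<gamma>, p). c (fst p) * d (snd p) * monomial \<gamma> h"
  have "((\<lambda>(\<alpha>, \<beta>). (c \<alpha> * monomial \<alpha> h) * (d \<beta> * monomial \<beta> h)) has_sum f (x + h) * g (x + h))
      (multi_indices \<times> multi_indices)"
    using assms[THEN power_series_expansionD(2), OF h] assms[THEN power_series_norm_summable, OF h]
    by (rule has_sum_mult_Times)
  also have "?this \<longleftrightarrow> (?term has_sum f (x + h) * g (x + h)) (Sigma multi_indices splittings)"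
  proof (rule has_sum_reindex_bij_witness[where i=snd and j="\<lambda>p. (\<lambda>k. fst p k + snd p k, p)"])
    fix p :: "('a \<Rightarrow> nat) \<times> ('a \<Rightarrow> nat)" assume "p \<in> multi_indices \<times> multi_indices"
    thus "(\<lambda>k. fst p k + snd p k, p) \<in> Sigma multi_indices splittings"
      by (auto simp: multi_indices_def splittings_def)
    show "?term (\<lambda>k. fst p k + snd p k, p) =
          (\<lambda>(\<alpha>, \<beta>). (c \<alpha> * monomial \<alpha> h) * (d \<beta> * monomial \<beta> h)) p"
      by (simp add: monomial_add case_prod_unfold mult_ac)
  next
    fix q :: "('a \<Rightarrow> nat) \<times> ('a \<Rightarrow> nat) \<times> ('a \<Rightarrow> nat)" assume "q \<in> Sigma multi_indices splittings"
    thus "(\<lambda>k. fst (snd q) k + snd (snd q) k, snd q) = q" "snd q \<in> multi_indices \<times> multi_indices"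
      by (auto simp: splittings_def)
  qed simp_all
  finally have "(?term has_sum f (x + h) * g (x + h)) (Sigma multi_indices splittings)" .
  moreover have "((\<lambda>p. ?term (\<gamma>, p)) has_sum cauchy_coeff c d \<gamma> * monomial \<gamma> h) (splittings \<gamma>)" for \<gamma>
    by (rule has_sum_finiteI[OF finite_splittings]) (simp add: cauchy_coeff_def sum_distrib_right)
  ultimately show "((\<lambda>\<gamma>. cauchy_coeff c d \<gamma> * monomial \<gamma> h) has_sum f (x + h) * g (x + h)) multi_indices"
    by (rule has_sum_SigmaD)
qed

lemma real_analytic_add:
  assumes "real_analytic f" "real_analytic g"
  shows "real_analytic (\<lambda>y. f y + g y)"
  unfolding real_analytic_iff_power_series
proof
  fix x
  obtain s c d where "power_series_expansion f x s c" "power_series_expansion g x s d"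
    using real_analytic_common_radius[OF assms] .
  thus "\<exists>s c. power_series_expansion (\<lambda>y. f y + g y) x s c"
    using power_series_expansion_add by blast
qed

lemma real_analytic_mult:
  assumes "real_analytic f" "real_analytic g"
  shows "real_analytic (\<lambda>y. f y * g y)"
  unfolding real_analytic_iff_power_series
proof
  fix x
  obtain s c d where "power_series_expansion f x s c" "power_series_expansion g x s d"
    using real_analytic_common_radius[OF assms] .
  thus "\<exists>s c. power_series_expansion (\<lambda>y. f y * g y) x s c"
    using power_series_expansion_mult by blast
qed

lemma real_analytic_uminus:
  assumes "real_analytic f"
  shows "real_analytic (\<lambda>y. - f y)"
  using assms power_series_expansion_cmult[of f _ _ _ "-1"]
  unfolding real_analytic_iff_power_series by fastforce

definition lift_snd_index :: "('b::euclidean_space \<Rightarrow> nat) \<Rightarrow> ('a::euclidean_space \<times> 'b \<Rightarrow> nat)" where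
  "lift_snd_index \<alpha> = (\<lambda>p. if fst p = 0 then \<alpha> (snd p) else 0)"

definition lift_snd_coeffs ::
    "(('b::euclidean_space \<Rightarrow> nat) \<Rightarrow> real) \<Rightarrow> ('a::euclidean_space \<times> 'b \<Rightarrow> nat) \<Rightarrow> real" where
  "lift_snd_coeffs c \<gamma> = (if \<forall>u\<in>Basis. \<gamma> (u, 0) = 0 then c (\<lambda>v. \<gamma> (0, v)) else 0)"

lemma zero_Pair_in_Basis_iff:
  "((0::'a::euclidean_space), v) \<in> (Basis :: ('a \<times> 'b::euclidean_space) set) \<longleftrightarrow> v \<in> Basis"
  by (auto simp: Basis_prod_def)

lemma monomial_lift_snd_index:
  fixes h :: "'a::euclidean_space \<times> 'b::euclidean_space"
  shows "monomial (lift_snd_index \<alpha> :: 'a \<times> 'b \<Rightarrow> nat) h = monomial \<alpha> (snd h)"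
proof -
  have disj: "(\<lambda>u. (u, 0::'b)) ` (Basis::'a set) \<inter> (\<lambda>v. (0::'a, v)) ` (Basis::'b set) = {}"
    by (auto simp: nonzero_Basis)
  have fst_part: "(\<Prod>p\<in>(\<lambda>u. (u, 0::'b)) ` (Basis::'a set). (h \<bullet> p) ^ lift_snd_index \<alpha> p) = 1"
    by (rule prod.neutral) (auto simp: lift_snd_index_def nonzero_Basis)
  have snd_part: "(\<Prod>p\<in>(\<lambda>v. (0::'a, v)) ` (Basis::'b set). (h \<bullet> p) ^ lift_snd_index \<alpha> p)
      = monomial \<alpha> (snd h)"
    by (subst prod.reindex) (auto simp: inj_on_def lift_snd_index_def monomial_def inner_Pair_0)
  show ?thesis
    unfolding monomial_def Basis_prod_def
    by (subst prod.union_disjoint) (use disj fst_part snd_part in \<open>auto simp: monomial_def\<close>)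
qed

lemma power_series_expansion_snd:
  fixes f :: "'b::euclidean_space \<Rightarrow> real"
  assumes "power_series_expansion f x s c"
  shows "power_series_expansion (\<lambda>p::'a::euclidean_space \<times> 'b. f (snd p)) (z, x) s (lift_snd_coeffs c)"
  unfolding power_series_expansion_def
proof (intro conjI ballI)
  show "0 < s" by (rule power_series_expansionD(1)[OF assms])
  fix h :: "'a \<times> 'b" assume h: "h \<in> polydisc s"
  let ?T = "{\<gamma>\<in>(multi_indices :: ('a \<times> 'b \<Rightarrow> nat) set). \<forall>u\<in>Basis. \<gamma> (u, 0) = 0}"
  have "\<bar>snd h \<bullet> v\<bar> \<le> s" if "v \<in> Basis" for v
    using h that zero_Pair_in_Basis_iff[of v] by (auto simp: polydisc_def inner_Pair_0 simp del: inner_Pair)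
  hence "snd h \<in> polydisc s" by (simp add: polydisc_def)
  hence "((\<lambda>\<alpha>. c \<alpha> * monomial \<alpha> (snd h)) has_sum f (x + snd h)) multi_indices"
    by (rule power_series_expansionD(2)[OF assms])
  also have "?this \<longleftrightarrow> ((\<lambda>\<gamma>. lift_snd_coeffs c \<gamma> * monomial \<gamma> h) has_sum f (x + snd h)) ?T"
  proof (rule has_sum_reindex_bij_witness[where i="\<lambda>\<gamma> v. \<gamma> (0, v)" and j=lift_snd_index])
    fix \<alpha> :: "'b \<Rightarrow> nat" assume \<alpha>: "\<alpha> \<in> multi_indices"
    show "(\<lambda>v. lift_snd_index \<alpha> ((0::'a), v)) = \<alpha>" by (simp add: lift_snd_index_def)
    show "(lift_snd_index \<alpha> :: 'a \<times> 'b \<Rightarrow> nat) \<in> ?T"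
      using \<alpha> by (auto simp: lift_snd_index_def multi_indices_def nonzero_Basis zero_Pair_in_Basis_iff)
    show "lift_snd_coeffs c (lift_snd_index \<alpha>) * monomial (lift_snd_index \<alpha>) h = c \<alpha> * monomial \<alpha> (snd h)"
      by (simp only: monomial_lift_snd_index) (simp add: lift_snd_coeffs_def lift_snd_index_def nonzero_Basis)
  next
    fix \<gamma> :: "'a \<times> 'b \<Rightarrow> nat" assume \<gamma>: "\<gamma> \<in> ?T"
    show "(\<lambda>v. \<gamma> (0, v)) \<in> multi_indices"
      using \<gamma> by (auto simp: multi_indices_def zero_Pair_in_Basis_iff)
    show "lift_snd_index (\<lambda>v. \<gamma> (0, v)) = \<gamma>"
    proof
      fix p :: "'a \<times> 'b"
      show "lift_snd_index (\<lambda>v. \<gamma> (0, v)) p = \<gamma> p"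
      proof (cases "fst p = 0")
        case True thus ?thesis by (simp add: lift_snd_index_def) (metis prod.collapse)
      next
        case False
        have "\<gamma> p = 0"
        proof (cases "p \<in> Basis")
          case True
          with False have "snd p = 0" "fst p \<in> Basis" by (auto simp: Basis_prod_def)
          with \<gamma> show ?thesis by (metis (mono_tags, lifting) mem_Collect_eq prod.collapse)
        next
          case False with \<gamma> show ?thesis unfolding multi_indices_def by blast
        qed
        with False show ?thesis by (simp add: lift_snd_index_def)
      qed
    qed
  qed simp
  also have "\<dots> \<longleftrightarrow> ((\<lambda>\<gamma>. lift_snd_coeffs c \<gamma> * monomial \<gamma> h) has_sum f (x + snd h)) multi_indices"
    by (rule has_sum_cong_neutral) (auto simp: lift_snd_coeffs_def)
  finally show "((\<lambda>\<gamma>. lift_snd_coeffs c \<gamma> * monomial \<gamma> h) has_sum f (snd ((z, x) + h))) multi_indices"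
    by (simp add: snd_add)
qed

lemma real_analytic_snd:
  fixes f :: "'b::euclidean_space \<Rightarrow> real"
  assumes "real_analytic f"
  shows "real_analytic (\<lambda>p::'a::euclidean_space \<times> 'b. f (snd p))"
  unfolding real_analytic_iff_power_series
proof
  fix p :: "'a \<times> 'b"
  obtain s c where "power_series_expansion f (snd p) s c"
    using assms real_analytic_iff_power_series by blast
  from power_series_expansion_snd[OF this, of "fst p"]
  show "\<exists>s c. power_series_expansion (\<lambda>p::'a \<times> 'b. f (snd p)) p s c" by auto
qed

section \<open>Termwise differentiation of power series\<close>

text \<open>The contribution of the coordinate \<open>b\<close> to the derivative of a monomial along \<open>v\<close>; the
  truncated exponent \<open>\<alpha> b - 1\<close> is harmless because the factor \<open>\<alpha> b\<close> vanishes with it.\<close>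
definition monomial_partial :: "'a::euclidean_space \<Rightarrow> ('a \<Rightarrow> nat) \<Rightarrow> 'a \<Rightarrow> 'a \<Rightarrow> real" where
  "monomial_partial v \<alpha> b y =
     (real (\<alpha> b) * (y \<bullet> b) ^ (\<alpha> b - 1) * (v \<bullet> b)) * (\<Prod>b'\<in>Basis - {b}. (y \<bullet> b') ^ \<alpha> b')"

definition monomial_dir_deriv :: "'a::euclidean_space \<Rightarrow> ('a \<Rightarrow> nat) \<Rightarrow> 'a \<Rightarrow> real" where
  "monomial_dir_deriv v \<alpha> y = (\<Sum>b\<in>Basis. monomial_partial v \<alpha> b y)"

lemma has_real_derivative_monomial:
  "((\<lambda>t. monomial \<alpha> (k + t *\<^sub>R v)) has_real_derivative monomial_dir_deriv v \<alpha> (k + t0 *\<^sub>R v)) (at t0)"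
proof -
  have "((\<lambda>t. \<Prod>b\<in>Basis. (\<lambda>b t. ((k + t *\<^sub>R v) \<bullet> b) ^ \<alpha> b) b t) has_real_derivative
      (\<Sum>b\<in>Basis. (real (\<alpha> b) * ((k + t0 *\<^sub>R v) \<bullet> b) ^ (\<alpha> b - 1) * (v \<bullet> b)) *
          (\<Prod>b'\<in>Basis - {b}. (\<lambda>b t. ((k + t *\<^sub>R v) \<bullet> b) ^ \<alpha> b) b' t0))) (at t0)"
  proof (rule has_field_derivative_prod)
    fix b :: 'a
    show "((\<lambda>t. ((k + t *\<^sub>R v) \<bullet> b) ^ \<alpha> b) has_real_derivative
            real (\<alpha> b) * ((k + t0 *\<^sub>R v) \<bullet> b) ^ (\<alpha> b - 1) * (v \<bullet> b)) (at t0)"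
      unfolding inner_add_left inner_scaleR_left by (auto intro!: derivative_eq_intros)
  qed
  thus ?thesis by (simp add: monomial_def monomial_dir_deriv_def monomial_partial_def)
qed

lemma total_degree_remove: "b \<in> Basis \<Longrightarrow> total_degree \<alpha> = \<alpha> b + (\<Sum>b'\<in>Basis - {b}. \<alpha> b')"
  unfolding total_degree_def by (simp add: sum.remove)

lemma abs_monomial_partial_le:
  assumes y: "y \<in> polydisc r" and r: "0 < r" and b: "b \<in> Basis"
  shows "\<bar>monomial_partial v \<alpha> b y\<bar> \<le> real (total_degree \<alpha>) * r ^ total_degree \<alpha> * (norm v / r)"
proof (cases "\<alpha> b = 0")
  case True thus ?thesis using r by (simp add: monomial_partial_def)
next
  case False
  let ?rest = "\<Sum>b'\<in>Basis - {b}. \<alpha> b'"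
  have rest: "\<bar>\<Prod>b'\<in>Basis - {b}. (y \<bullet> b') ^ \<alpha> b'\<bar> \<le> r ^ ?rest"
  proof -
    have "\<bar>\<Prod>b'\<in>Basis - {b}. (y \<bullet> b') ^ \<alpha> b'\<bar> = (\<Prod>b'\<in>Basis - {b}. \<bar>y \<bullet> b'\<bar> ^ \<alpha> b')"
      by (simp add: abs_prod power_abs)
    also have "\<dots> \<le> (\<Prod>b'\<in>Basis - {b}. r ^ \<alpha> b')"
      using y by (intro prod_mono) (auto simp: polydisc_def intro!: power_mono)
    finally show ?thesis by (simp add: power_sum)
  qed
  have main: "\<bar>y \<bullet> b\<bar> ^ (\<alpha> b - 1) * r \<le> r ^ \<alpha> b"
  proof -
    have "\<bar>y \<bullet> b\<bar> ^ (\<alpha> b - 1) * r \<le> r ^ (\<alpha> b - 1) * r"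
      using y b r by (intro mult_right_mono power_mono) (auto simp: polydisc_def)
    also have "\<dots> = r ^ Suc (\<alpha> b - 1)" by (rule power_Suc2[symmetric])
    also have "\<dots> = r ^ \<alpha> b" using False by simp
    finally show ?thesis .
  qed
  have "\<alpha> b \<le> total_degree \<alpha>" using total_degree_remove[OF b, of \<alpha>] by simp
  hence coeff: "real (\<alpha> b) * \<bar>v \<bullet> b\<bar> \<le> real (total_degree \<alpha>) * norm v"
    using Basis_le_norm[OF b, of v] by (intro mult_mono) auto
  have "\<bar>monomial_partial v \<alpha> b y\<bar> * r
      = real (\<alpha> b) * \<bar>v \<bullet> b\<bar> * ((\<bar>y \<bullet> b\<bar> ^ (\<alpha> b - 1) * r) * \<bar>\<Prod>b'\<in>Basis - {b}. (y \<bullet> b') ^ \<alpha> b'\<bar>)"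
    by (simp add: monomial_partial_def abs_mult power_abs mult_ac)
  also have "\<dots> \<le> real (total_degree \<alpha>) * norm v * (r ^ \<alpha> b * r ^ ?rest)"
    by (rule mult_mono[OF coeff mult_mono[OF main rest]]) (use r in auto)
  also have "\<dots> = real (total_degree \<alpha>) * norm v * r ^ total_degree \<alpha>"
    using total_degree_remove[OF b, of \<alpha>] by (simp add: power_add)
  finally have "\<bar>monomial_partial v \<alpha> b y\<bar> \<le> real (total_degree \<alpha>) * norm v * r ^ total_degree \<alpha> / r"
    using r by (simp add: pos_le_divide_eq)
  thus ?thesis by (simp add: mult_ac)
qed

text \<open>Differentiation costs a factor \<open>n\<close> on the terms of degree \<open>n\<close>, which is absorbed by
  shrinking the radius, since \<open>n q ^ n\<close> is bounded for \<open>q < 1\<close>.\<close>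
lemma power_series_degree_summable:
  assumes p: "power_series_expansion f x s c" and r: "0 < r" "r < s"
  shows "(\<lambda>\<alpha>. \<bar>c \<alpha>\<bar> * real (total_degree \<alpha>) * r ^ total_degree \<alpha>) summable_on multi_indices"
proof -
  have s: "0 < s" using r by simp
  have "(\<lambda>n. real n * (r / s) ^ n) \<longlonglongrightarrow> 0"
    using powser_times_n_limit_0[of "r / s"] r by simp
  hence "Bseq (\<lambda>n. real n * (r / s) ^ n)" by (intro convergent_imp_Bseq convergentI)
  then obtain K where "\<forall>n. norm (real n * (r / s) ^ n) \<le> K" by (auto elim: BseqE)
  hence K: "real n * (r / s) ^ n \<le> K" for n by (simp add: abs_le_iff)
  have "(\<lambda>\<alpha>. K * (\<bar>c \<alpha>\<bar> * s ^ total_degree \<alpha>)) summable_on multi_indices"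
    by (rule summable_on_cmult_right[OF power_series_abs_summable[OF p]])
  thus ?thesis
  proof (rule summable_on_comparison_test)
    fix \<alpha> :: "'a \<Rightarrow> nat"
    have "real (total_degree \<alpha>) * r ^ total_degree \<alpha>
        = (real (total_degree \<alpha>) * (r / s) ^ total_degree \<alpha>) * s ^ total_degree \<alpha>"
      using s by (simp add: power_divide)
    also have "\<dots> \<le> K * s ^ total_degree \<alpha>"
      using K[of "total_degree \<alpha>"] s by (intro mult_right_mono) auto
    finally have "real (total_degree \<alpha>) * r ^ total_degree \<alpha> \<le> K * s ^ total_degree \<alpha>" .
    hence "\<bar>c \<alpha>\<bar> * (real (total_degree \<alpha>) * r ^ total_degree \<alpha>) \<le> \<bar>c \<alpha>\<bar> * (K * s ^ total_degree \<alpha>)"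
      by (rule mult_left_mono) simp
    thus "\<bar>c \<alpha>\<bar> * real (total_degree \<alpha>) * r ^ total_degree \<alpha> \<le> K * (\<bar>c \<alpha>\<bar> * s ^ total_degree \<alpha>)"
      by (simp add: mult_ac)
    show "0 \<le> \<bar>c \<alpha>\<bar> * real (total_degree \<alpha>) * r ^ total_degree \<alpha>" using r by simp
  qed
qed

lemma power_series_partial_dominated:
  assumes p: "power_series_expansion f x s c" and r: "0 < r" "r < s"
  obtains M where "M summable_on multi_indices" "\<And>\<alpha>. 0 \<le> M \<alpha>"
    "\<And>\<alpha> b y. y \<in> polydisc r \<Longrightarrow> b \<in> Basis \<Longrightarrow> \<bar>c \<alpha> * monomial_partial v \<alpha> b y\<bar> \<le> M \<alpha>"
proof
  let ?M = "\<lambda>\<alpha>. \<bar>c \<alpha>\<bar> * real (total_degree \<alpha>) * r ^ total_degree \<alpha> * (norm v / r)"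
  show "?M summable_on multi_indices"
    by (rule summable_on_cmult_left[OF power_series_degree_summable[OF p r]])
  show "0 \<le> ?M \<alpha>" for \<alpha> using r by simp
  show "\<bar>c \<alpha> * monomial_partial v \<alpha> b y\<bar> \<le> ?M \<alpha>" if "y \<in> polydisc r" "b \<in> Basis" for \<alpha> b y
    using mult_left_mono[OF abs_monomial_partial_le[OF that(1) r(1) that(2)], of "\<bar>c \<alpha>\<bar>"]
    by (simp add: abs_mult mult_ac)
qed

lemma countable_multi_indices: "countable (multi_indices :: ('a::euclidean_space \<Rightarrow> nat) set)"
proof -
  let ?extend = "\<lambda>\<phi>::'a \<Rightarrow> nat. \<lambda>b. if b \<in> Basis then \<phi> b else 0"
  have "multi_indices \<subseteq> ?extend ` (PiE Basis (\<lambda>b. UNIV))"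
  proof
    fix \<alpha> :: "'a \<Rightarrow> nat" assume "\<alpha> \<in> multi_indices"
    hence "\<alpha> = ?extend (restrict \<alpha> Basis)" by (auto simp: multi_indices_def fun_eq_iff)
    thus "\<alpha> \<in> ?extend ` (PiE Basis (\<lambda>b. UNIV))" by auto
  qed
  moreover have "countable (PiE (Basis::'a set) (\<lambda>b. UNIV :: nat set))"
    by (intro countable_PiE) auto
  ultimately show ?thesis by (rule countable_subset[OF _ countable_image])
qed

lemma infinite_multi_indices: "infinite (multi_indices :: ('a::euclidean_space \<Rightarrow> nat) set)"
proof
  assume fin: "finite (multi_indices :: ('a \<Rightarrow> nat) set)"
  obtain b0 :: 'a where b0: "b0 \<in> Basis" using nonempty_Basis by blast
  let ?pow = "\<lambda>n::nat. (\<lambda>b. if b = b0 then n else 0) :: 'a \<Rightarrow> nat"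
  have "inj ?pow"
  proof (rule injI)
    fix m n assume "?pow m = ?pow n"
    hence "?pow m b0 = ?pow n b0" by (rule arg_cong)
    thus "m = n" by simp
  qed
  moreover have "range ?pow \<subseteq> multi_indices" using b0 by (auto simp: multi_indices_def)
  ultimately have "finite (UNIV :: nat set)"
    using fin finite_imageD finite_subset by blast
  thus False by simp
qed

definition enum_multi_index :: "nat \<Rightarrow> ('a::euclidean_space \<Rightarrow> nat)" where
  "enum_multi_index = from_nat_into multi_indices"

lemma has_sum_enum_multi_index:
  "(g has_sum S) multi_indices \<longleftrightarrow> ((\<lambda>n. g (enum_multi_index n)) has_sum S) UNIV"
  unfolding enum_multi_index_def
  by (rule has_sum_reindex_bij_betw[OF bij_betw_from_nat_into[OF countable_multi_indices infinite_multi_indices],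
        symmetric])

lemma summable_enum_multi_index:
  "(g summable_on multi_indices) \<longleftrightarrow> ((\<lambda>n. g (enum_multi_index n)) summable_on UNIV)"
  unfolding summable_on_def using has_sum_enum_multi_index by blast

lemma has_sum_finite_sum:
  fixes g :: "'b \<Rightarrow> 'c \<Rightarrow> real"
  assumes "finite B" "\<And>b. b \<in> B \<Longrightarrow> (g b has_sum S b) A"
  shows "((\<lambda>a. \<Sum>b\<in>B. g b a) has_sum (\<Sum>b\<in>B. S b)) A"
  using assms by (induction B rule: finite_induct) (auto intro: has_sum_add)

lemma polydisc_add_scaleR:
  assumes "k \<in> polydisc r" "\<bar>t\<bar> * norm v \<le> r' - r"
  shows "k + t *\<^sub>R v \<in> polydisc r'"
  unfolding polydisc_def mem_Collect_eq
proof
  fix b :: 'a assume b: "b \<in> Basis"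
  have "\<bar>(k + t *\<^sub>R v) \<bullet> b\<bar> \<le> \<bar>k \<bullet> b\<bar> + \<bar>t\<bar> * \<bar>v \<bullet> b\<bar>"
    by (simp add: inner_add_left abs_mult[symmetric] abs_triangle_ineq)
  also have "\<dots> \<le> r + \<bar>t\<bar> * norm v"
    using assms(1) b Basis_le_norm[OF b, of v] by (intro add_mono mult_left_mono) (auto simp: polydisc_def)
  finally show "\<bar>(k + t *\<^sub>R v) \<bullet> b\<bar> \<le> r'" using assms(2) by simp
qed

lemma has_real_derivative_termwise:
  fixes g g' :: "('a::euclidean_space \<Rightarrow> nat) \<Rightarrow> real \<Rightarrow> real"
  assumes S: "convex S" "t0 \<in> interior S"
    and sum: "\<And>t. t \<in> S \<Longrightarrow> ((\<lambda>\<alpha>. g \<alpha> t) has_sum F t) multi_indices"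
    and deriv: "\<And>\<alpha> t. t \<in> S \<Longrightarrow> (g \<alpha> has_real_derivative g' \<alpha> t) (at t within S)"
    and M: "M summable_on multi_indices" "\<And>\<alpha>. 0 \<le> M \<alpha>" "\<And>\<alpha> t. t \<in> S \<Longrightarrow> \<bar>g' \<alpha> t\<bar> \<le> M \<alpha>"
  shows "(F has_real_derivative (\<Sum>\<^sub>\<infinity>\<alpha>\<in>multi_indices. g' \<alpha> t0)) (at t0)"
proof -
  let ?e = enum_multi_index
  have t0: "t0 \<in> S" using S(2) interior_subset by blast
  have sums: "(\<lambda>n. g (?e n) t) sums F t" if "t \<in> S" for t
    using sum[OF that] unfolding has_sum_enum_multi_index by (rule has_sum_imp_sums)
  have "summable (\<lambda>n. M (?e n))"
    using summable_enum_multi_index[THEN iffD1, OF M(1)] by (simp add: summable_on_UNIV_nonneg_real_iff M(2))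
  hence "uniformly_convergent_on S (\<lambda>n t. \<Sum>i<n. g' (?e i) t)"
    by (rule Weierstrass_m_test'[rotated]) (simp add: M(3))
  from has_field_derivative_series'(2)[OF S(1) deriv this t0 sums_summable[OF sums[OF t0]] S(2)]
  have D: "((\<lambda>t. \<Sum>n. g (?e n) t) has_real_derivative (\<Sum>n. g' (?e n) t0)) (at t0)" .
  have "(\<lambda>\<alpha>. g' \<alpha> t0) summable_on multi_indices"
    by (rule abs_summable_summable, rule summable_on_comparison_test[OF M(1)]) (simp_all add: M(3)[OF t0])
  hence "((\<lambda>\<alpha>. g' \<alpha> t0) has_sum (\<Sum>\<^sub>\<infinity>\<alpha>\<in>multi_indices. g' \<alpha> t0)) multi_indices"
    by (rule has_sum_infsum)
  hence "((\<lambda>n. g' (?e n) t0) has_sum (\<Sum>\<^sub>\<infinity>\<alpha>\<in>multi_indices. g' \<alpha> t0)) UNIV"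
    by (simp add: has_sum_enum_multi_index)
  hence "(\<Sum>n. g' (?e n) t0) = (\<Sum>\<^sub>\<infinity>\<alpha>\<in>multi_indices. g' \<alpha> t0)"
    by (intro sums_unique[symmetric] has_sum_imp_sums)
  moreover have "\<forall>\<^sub>F t in nhds t0. (\<Sum>n. g (?e n) t) = F t"
    using eventually_nhds_in_open[OF open_interior S(2)]
  proof (rule eventually_mono)
    fix t assume "t \<in> interior S"
    with interior_subset have "t \<in> S" by blast
    from sums_unique[OF sums[OF this]] show "(\<Sum>n. g (?e n) t) = F t" by simp
  qed
  ultimately show ?thesis using DERIV_cong_ev[OF refl, THEN iffD1, OF _ _ D] by simp
qed

lemma power_series_line_derivative:
  fixes v k :: "'a::euclidean_space"
  assumes p: "power_series_expansion f x s c" and r: "0 < r" "r < s" and k: "k \<in> polydisc r"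
  shows "((\<lambda>t. f (x + k + t *\<^sub>R v)) has_real_derivative
           (\<Sum>\<^sub>\<infinity>\<alpha>\<in>multi_indices. c \<alpha> * monomial_dir_deriv v \<alpha> k)) (at 0)"
proof -
  define r' where "r' = (r + s) / 2"
  have r': "0 < r'" "r' < s" "r < r'" using r by (auto simp: r'_def)
  obtain M where M: "M summable_on multi_indices" "\<And>\<alpha>. 0 \<le> M \<alpha>"
    "\<And>\<alpha> b y. y \<in> polydisc r' \<Longrightarrow> b \<in> Basis \<Longrightarrow> \<bar>c \<alpha> * monomial_partial v \<alpha> b y\<bar> \<le> M \<alpha>"
    using power_series_partial_dominated[OF p r'(1,2), where v=v] by blast
  have bound: "\<bar>c \<alpha> * monomial_dir_deriv v \<alpha> y\<bar> \<le> DIM('a) * M \<alpha>" if "y \<in> polydisc r'" for \<alpha> y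
  proof -
    have "\<bar>c \<alpha> * monomial_dir_deriv v \<alpha> y\<bar> \<le> (\<Sum>b\<in>Basis. \<bar>c \<alpha> * monomial_partial v \<alpha> b y\<bar>)"
      unfolding monomial_dir_deriv_def sum_distrib_left by (rule sum_abs)
    also have "\<dots> \<le> (\<Sum>b\<in>(Basis::'a set). M \<alpha>)" using M(3)[OF that] by (intro sum_mono)
    finally show ?thesis by simp
  qed
  define \<delta> where "\<delta> = (r' - r) / (norm v + 1)"
  have \<delta>: "0 < \<delta>" using r' by (simp add: \<delta>_def add_nonneg_pos)
  have line: "k + t *\<^sub>R v \<in> polydisc r'" if "t \<in> cball 0 \<delta>" for t
  proof (rule polydisc_add_scaleR[OF k])
    have "\<bar>t\<bar> * norm v \<le> \<delta> * (norm v + 1)"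
      using that \<delta> by (intro mult_mono) auto
    thus "\<bar>t\<bar> * norm v \<le> r' - r" using norm_ge_zero[of v] by (simp add: \<delta>_def)
  qed
  have "((\<lambda>t. f (x + k + t *\<^sub>R v)) has_real_derivative
      (\<Sum>\<^sub>\<infinity>\<alpha>\<in>multi_indices. c \<alpha> * monomial_dir_deriv v \<alpha> (k + 0 *\<^sub>R v))) (at 0)"
  proof (rule has_real_derivative_termwise[where S="cball 0 \<delta>" and M="\<lambda>\<alpha>. DIM('a) * M \<alpha>"
        and g="\<lambda>\<alpha> t. c \<alpha> * monomial \<alpha> (k + t *\<^sub>R v)" and g'="\<lambda>\<alpha> t. c \<alpha> * monomial_dir_deriv v \<alpha> (k + t *\<^sub>R v)"])
    show "convex (cball (0::real) \<delta>)" "0 \<in> interior (cball (0::real) \<delta>)" using \<delta> by auto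
    show "(\<lambda>\<alpha>. DIM('a) * M \<alpha>) summable_on multi_indices" by (rule summable_on_cmult_right[OF M(1)])
    show "0 \<le> DIM('a) * M \<alpha>" for \<alpha> using M(2) by simp
    fix t :: real assume t: "t \<in> cball 0 \<delta>"
    show "((\<lambda>\<alpha>. c \<alpha> * monomial \<alpha> (k + t *\<^sub>R v)) has_sum f (x + k + t *\<^sub>R v)) multi_indices"
      using power_series_expansionD(2)[OF p polydisc_mono[OF line[OF t] less_imp_le[OF r'(2)]]]
      by (simp add: add.assoc)
    show "\<bar>c \<alpha> * monomial_dir_deriv v \<alpha> (k + t *\<^sub>R v)\<bar> \<le> DIM('a) * M \<alpha>" for \<alpha>
      by (rule bound[OF line[OF t]])
    show "((\<lambda>t. c \<alpha> * monomial \<alpha> (k + t *\<^sub>R v)) has_real_derivative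
        c \<alpha> * monomial_dir_deriv v \<alpha> (k + t *\<^sub>R v)) (at t within cball 0 \<delta>)" for \<alpha>
      by (rule has_field_derivative_at_within, rule DERIV_cmult, rule has_real_derivative_monomial)
  qed
  thus ?thesis by simp
qed

definition dir_deriv :: "'a::euclidean_space \<Rightarrow> ('a \<Rightarrow> real) \<Rightarrow> 'a \<Rightarrow> real" where
  "dir_deriv v f z = deriv (\<lambda>t. f (z + t *\<^sub>R v)) 0"

lemma has_real_derivative_dir_deriv:
  assumes "real_analytic f"
  shows "((\<lambda>t. f (z + t *\<^sub>R v)) has_real_derivative dir_deriv v f (z + t0 *\<^sub>R v)) (at t0)"
proof -
  let ?z = "z + t0 *\<^sub>R v"
  obtain s c where p: "power_series_expansion f ?z s c"
    using assms real_analytic_iff_power_series by blast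
  have "0 < s" by (rule power_series_expansionD(1)[OF p])
  then obtain D where "((\<lambda>t. f (?z + 0 + t *\<^sub>R v)) has_real_derivative D) (at 0)"
    using power_series_line_derivative[OF p, of "s / 2" 0 v] zero_in_polydisc[of "s / 2"] by auto
  hence D: "((\<lambda>t. f (?z + t *\<^sub>R v)) has_real_derivative D) (at 0)" by simp
  moreover from D have "dir_deriv v f ?z = D" unfolding dir_deriv_def by (rule DERIV_imp_deriv)
  moreover have "(\<lambda>t. f (?z + t *\<^sub>R v)) = (\<lambda>t. f (z + (t + t0) *\<^sub>R v))"
    by (simp add: scaleR_add_left add_ac)
  ultimately show ?thesis using DERIV_shift[of "\<lambda>t. f (z + t *\<^sub>R v)" _ 0 t0] by simp
qed

lemma periodic_coord_dir_deriv:
  assumes "periodic_coord p f"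
  shows "periodic_coord p (dir_deriv v f)"
  unfolding periodic_coord_def
proof (intro allI ballI)
  fix z b :: 'a assume b: "b \<in> Basis"
  have "(\<lambda>t. f (z + p *\<^sub>R b + t *\<^sub>R v)) = (\<lambda>t. f ((z + t *\<^sub>R v) + p *\<^sub>R b))"
    by (simp add: add_ac)
  also have "\<dots> = (\<lambda>t. f (z + t *\<^sub>R v))"
    using assms b unfolding periodic_coord_def by simp
  finally show "dir_deriv v f (z + p *\<^sub>R b) = dir_deriv v f z" by (simp add: dir_deriv_def)
qed

lemma monomial_partial_Suc:
  assumes b: "b \<in> Basis"
  shows "monomial_partial v (\<gamma>(b := Suc (\<gamma> b))) b k = (v \<bullet> b) * real (Suc (\<gamma> b)) * monomial \<gamma> k"
proof -
  have "(\<Prod>b'\<in>Basis - {b}. (k \<bullet> b') ^ (\<gamma>(b := Suc (\<gamma> b))) b') = (\<Prod>b'\<in>Basis - {b}. (k \<bullet> b') ^ \<gamma> b')"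
    by (rule prod.cong) auto
  moreover have "monomial \<gamma> k = (k \<bullet> b) ^ \<gamma> b * (\<Prod>b'\<in>Basis - {b}. (k \<bullet> b') ^ \<gamma> b')"
    unfolding monomial_def using b by (simp add: prod.remove)
  ultimately show ?thesis unfolding monomial_partial_def by simp
qed

lemma has_sum_monomial_partial_reindex:
  assumes b: "b \<in> Basis" and sum: "((\<lambda>\<alpha>. c \<alpha> * monomial_partial v \<alpha> b k) has_sum S) multi_indices"
  shows "((\<lambda>\<gamma>. (v \<bullet> b) * real (Suc (\<gamma> b)) * c (\<gamma>(b := Suc (\<gamma> b))) * monomial \<gamma> k) has_sum S)
           multi_indices"
proof -
  let ?T = "{\<alpha>\<in>multi_indices. \<alpha> b \<noteq> 0}"
  have "((\<lambda>\<alpha>. c \<alpha> * monomial_partial v \<alpha> b k) has_sum S) ?T"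
    using sum by (subst has_sum_cong_neutral[where T=multi_indices]) (auto simp: monomial_partial_def)
  also have "?this \<longleftrightarrow> ?thesis"
  proof (rule has_sum_reindex_bij_witness[where j="\<lambda>\<gamma>. \<gamma>(b := Suc (\<gamma> b))" and i="\<lambda>\<alpha>. \<alpha>(b := \<alpha> b - 1)",
        symmetric])
    fix \<gamma> :: "'a \<Rightarrow> nat" assume "\<gamma> \<in> multi_indices"
    thus "\<gamma>(b := Suc (\<gamma> b)) \<in> ?T" using b by (auto simp: multi_indices_def)
    show "(\<gamma>(b := Suc (\<gamma> b)))(b := (\<gamma>(b := Suc (\<gamma> b))) b - 1) = \<gamma>" by simp
    show "c (\<gamma>(b := Suc (\<gamma> b))) * monomial_partial v (\<gamma>(b := Suc (\<gamma> b))) b k =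
          (v \<bullet> b) * real (Suc (\<gamma> b)) * c (\<gamma>(b := Suc (\<gamma> b))) * monomial \<gamma> k"
      by (simp add: monomial_partial_Suc[OF b] mult_ac)
  next
    fix \<alpha> :: "'a \<Rightarrow> nat" assume "\<alpha> \<in> ?T"
    thus "(\<alpha>(b := \<alpha> b - 1))(b := Suc ((\<alpha>(b := \<alpha> b - 1)) b)) = \<alpha>" "\<alpha>(b := \<alpha> b - 1) \<in> multi_indices"
      using b by (auto simp: multi_indices_def fun_eq_iff)
  qed simp
  finally show ?thesis .
qed

lemma power_series_expansion_dir_deriv:
  assumes p: "power_series_expansion f x s c"
  shows "power_series_expansion (dir_deriv v f) x (s / 2)
           (\<lambda>\<gamma>. \<Sum>b\<in>Basis. (v \<bullet> b) * real (Suc (\<gamma> b)) * c (\<gamma>(b := Suc (\<gamma> b))))"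
  unfolding power_series_expansion_def
proof (intro conjI ballI)
  have s: "0 < s / 2" "s / 2 < s" using power_series_expansionD(1)[OF p] by auto
  thus "0 < s / 2" by simp
  fix k :: 'a assume k: "k \<in> polydisc (s / 2)"
  obtain M where M: "M summable_on multi_indices" "\<And>\<alpha>. 0 \<le> M \<alpha>"
    "\<And>\<alpha> b y. y \<in> polydisc (s / 2) \<Longrightarrow> b \<in> Basis \<Longrightarrow> \<bar>c \<alpha> * monomial_partial v \<alpha> b y\<bar> \<le> M \<alpha>"
    using power_series_partial_dominated[OF p s, where v=v] by blast
  define Q where "Q b = (\<Sum>\<^sub>\<infinity>\<alpha>\<in>multi_indices. c \<alpha> * monomial_partial v \<alpha> b k)" for b
  have Q: "((\<lambda>\<alpha>. c \<alpha> * monomial_partial v \<alpha> b k) has_sum Q b) multi_indices" if "b \<in> Basis" for b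
    unfolding Q_def
    by (rule has_sum_infsum, rule abs_summable_summable, rule summable_on_comparison_test[OF M(1)])
      (use M(3)[OF k that] in auto)
  have "((\<lambda>\<alpha>. c \<alpha> * monomial_dir_deriv v \<alpha> k) has_sum (\<Sum>b\<in>Basis. Q b)) multi_indices"
    using has_sum_finite_sum[OF finite_Basis Q]
    by (simp add: monomial_dir_deriv_def sum_distrib_left)
  hence "((\<lambda>t. f (x + k + t *\<^sub>R v)) has_real_derivative (\<Sum>b\<in>Basis. Q b)) (at 0)"
    using power_series_line_derivative[OF p s k, of v] by (simp add: infsumI)
  hence "dir_deriv v f (x + k) = (\<Sum>b\<in>Basis. Q b)"
    unfolding dir_deriv_def by (intro DERIV_imp_deriv) simp
  moreover have "((\<lambda>\<gamma>. \<Sum>b\<in>Basis. (v \<bullet> b) * real (Suc (\<gamma> b)) * c (\<gamma>(b := Suc (\<gamma> b))) * monomial \<gamma> k)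
      has_sum (\<Sum>b\<in>Basis. Q b)) multi_indices"
    by (rule has_sum_finite_sum[OF finite_Basis has_sum_monomial_partial_reindex[OF _ Q]])
  ultimately show "((\<lambda>\<gamma>. (\<Sum>b\<in>Basis. (v \<bullet> b) * real (Suc (\<gamma> b)) * c (\<gamma>(b := Suc (\<gamma> b)))) * monomial \<gamma> k)
      has_sum dir_deriv v f (x + k)) multi_indices"
    by (simp add: sum_distrib_right)
qed

lemma real_analytic_dir_deriv:
  assumes "real_analytic f"
  shows "real_analytic (dir_deriv v f)"
  using assms power_series_expansion_dir_deriv unfolding real_analytic_iff_power_series by blast

section \<open>Analytic and differentiable \<open>2 \<times> 2\<close> matrix functions\<close>

lemma matrix_mult_2_entry:
  "((A :: real^2^2) ** B) $ i $ j = A $ i $ 1 * B $ 1 $ j + A $ i $ 2 * B $ 2 $ j"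
  by (simp add: matrix_matrix_mult_def sum_2)

lemma matrix_add_rdistrib: "((A :: 'a::semiring_1^'n^'m) + B) ** C = A ** C + B ** C"
  by (simp add: vec_eq_iff matrix_matrix_mult_def distrib_right sum.distrib)

lemma trace2_eq_trace: "trace2 M = trace M"
  by (simp add: trace2_def trace_def sum_2)

lemma analytic_mat_add:
  assumes "analytic_mat F" "analytic_mat G"
  shows "analytic_mat (\<lambda>x. F x + G x)"
  using assms unfolding analytic_mat_def by (auto intro!: real_analytic_add)

lemma analytic_mat_mult:
  assumes "analytic_mat F" "analytic_mat G"
  shows "analytic_mat (\<lambda>x. F x ** G x)"
  using assms unfolding analytic_mat_def matrix_mult_2_entry
  by (intro allI real_analytic_add real_analytic_mult) auto

lemma analytic_mat_snd:
  assumes "analytic_mat (F :: 'b::euclidean_space \<Rightarrow> real^2^2)"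
  shows "analytic_mat (\<lambda>p::'a::euclidean_space \<times> 'b. F (snd p))"
  using assms unfolding analytic_mat_def by (auto intro!: real_analytic_snd)

lemma periodic_coord_snd:
  assumes "periodic_coord p F"
  shows "periodic_coord p (\<lambda>q::'a::euclidean_space \<times> 'b::euclidean_space. F (snd q))"
  unfolding periodic_coord_def
proof (intro allI ballI)
  fix q b :: "'a \<times> 'b" assume "b \<in> Basis"
  hence "snd b = 0 \<or> snd b \<in> Basis" by (auto simp: Basis_prod_def)
  thus "F (snd (q + p *\<^sub>R b)) = F (snd q)"
    using assms unfolding periodic_coord_def by auto
qed

definition adj2 :: "real^2^2 \<Rightarrow> real^2^2" where
  "adj2 M = (\<chi> i j. if i = 1 then (if j = 1 then M$2$2 else - M$1$2)
                     else (if j = 1 then - M$2$1 else M$1$1))"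

lemma adj2_entries:
  "adj2 M $ 1 $ 1 = M $ 2 $ 2" "adj2 M $ 1 $ 2 = - M $ 1 $ 2"
  "adj2 M $ 2 $ 1 = - M $ 2 $ 1" "adj2 M $ 2 $ 2 = M $ 1 $ 1"
  by (simp_all add: adj2_def)

lemma adj2_inverse:
  assumes "det M = 1"
  shows "M ** adj2 M = mat 1" "adj2 M ** M = mat 1"
  using assms by (simp_all add: vec_eq_iff forall_2 matrix_mult_2_entry adj2_entries det_2 mat_def
      algebra_simps)

lemma matrix_inv_eq_adj2:
  assumes "det M = 1"
  shows "matrix_inv M = adj2 M"
  unfolding matrix_inv_def
proof (rule some_equality)
  show "M ** adj2 M = mat 1 \<and> adj2 M ** M = mat 1" using adj2_inverse[OF assms] by simp
  fix N assume "M ** N = mat 1 \<and> N ** M = mat 1"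
  have "N = N ** (M ** adj2 M)" using adj2_inverse[OF assms] by simp
  also have "\<dots> = (N ** M) ** adj2 M" by (rule matrix_mul_assoc)
  also have "\<dots> = adj2 M" using \<open>M ** N = mat 1 \<and> N ** M = mat 1\<close> by simp
  finally show "N = adj2 M" .
qed

lemma analytic_mat_adj2:
  assumes "analytic_mat F"
  shows "analytic_mat (\<lambda>x. adj2 (F x))"
  unfolding analytic_mat_def
proof (intro allI)
  fix i j :: 2
  have "real_analytic (\<lambda>x. F x $ i $ j)" for i j using assms by (simp add: analytic_mat_def)
  thus "real_analytic (\<lambda>x. adj2 (F x) $ i $ j)"
    using exhaust_2[of i] exhaust_2[of j] by (auto simp: adj2_entries intro!: real_analytic_uminus)
qed

lemma has_vector_derivative_matrixI:
  fixes F :: "real \<Rightarrow> real^'m^'k"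
  assumes "\<And>i j. ((\<lambda>s. F s $ i $ j) has_real_derivative F' $ i $ j) (at t)"
  shows "(F has_vector_derivative F') (at t)"
  unfolding has_vector_derivative_def
proof (subst has_derivative_componentwise_within, intro ballI)
  fix b :: "real^'m^'k" assume "b \<in> Basis"
  then obtain i j where b: "b = axis i (axis j 1)" unfolding Basis_vec_def by auto
  have entry: "M \<bullet> b = M $ i $ j" for M :: "real^'m^'k" by (simp add: b inner_axis)
  have "(\<lambda>x. x * F' $ i $ j) = (*) (F' $ i $ j)" by (auto simp: mult.commute)
  thus "((\<lambda>x. F x \<bullet> b) has_derivative (\<lambda>x. x *\<^sub>R F' \<bullet> b)) (at t within UNIV)"
    using assms[of i j] unfolding entry has_field_derivative_def by simp
qed

lemma has_vector_derivative_matrix_entry: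
  fixes F :: "real \<Rightarrow> real^'m^'k"
  assumes "(F has_vector_derivative F') (at t)"
  shows "((\<lambda>s. F s $ i $ j) has_real_derivative F' $ i $ j) (at t)"
proof -
  have "bounded_linear (\<lambda>M :: real^'m^'k. M $ i $ j)"
    by (rule bounded_linear_compose[OF bounded_linear_vec_nth bounded_linear_vec_nth])
  from bounded_linear.has_derivative[OF this assms[unfolded has_vector_derivative_def]]
  have "((\<lambda>s. F s $ i $ j) has_derivative (\<lambda>x. (x *\<^sub>R F') $ i $ j)) (at t)" .
  moreover have "(\<lambda>x. (x *\<^sub>R F') $ i $ j) = (*) (F' $ i $ j)" by (auto simp: mult.commute)
  ultimately show ?thesis unfolding has_field_derivative_def by simp
qed

lemma has_vector_derivative_matrix_mult:
  fixes F :: "real \<Rightarrow> real^'n^'m" and G :: "real \<Rightarrow> real^'k^'n"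
  assumes "(F has_vector_derivative F') (at t)" "(G has_vector_derivative G') (at t)"
  shows "((\<lambda>s. F s ** G s) has_vector_derivative (F t ** G' + F' ** G t)) (at t)"
proof -
  have "bilinear (\<lambda>(A::real^'n^'m) (B::real^'k^'n). A ** B)"
    unfolding bilinear_def
    by (auto intro!: linearI simp: vec_eq_iff matrix_matrix_mult_def sum.distrib sum_distrib_left
        algebra_simps)
  hence "bounded_bilinear (\<lambda>(A::real^'n^'m) (B::real^'k^'n). A ** B)"
    by (simp add: bilinear_conv_bounded_bilinear)
  from bounded_bilinear.has_vector_derivative[OF this assms] show ?thesis .
qed

lemma has_vector_derivative_adj2:
  assumes "(F has_vector_derivative F') (at t)"
  shows "((\<lambda>s. adj2 (F s)) has_vector_derivative adj2 F') (at t)"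
proof (rule has_vector_derivative_matrixI)
  fix i j :: 2
  have "((\<lambda>s. F s $ i $ j) has_real_derivative F' $ i $ j) (at t)" for i j
    by (rule has_vector_derivative_matrix_entry[OF assms])
  thus "((\<lambda>s. adj2 (F s) $ i $ j) has_real_derivative adj2 F' $ i $ j) (at t)"
    using exhaust_2[of i] exhaust_2[of j] by (auto simp: adj2_entries intro!: DERIV_minus)
qed

lemma has_real_derivative_det2:
  fixes F :: "real \<Rightarrow> real^2^2"
  assumes "(F has_vector_derivative F') (at t)"
  shows "((\<lambda>s. det (F s)) has_real_derivative trace2 (adj2 F' ** F t)) (at t)"
proof -
  have "((\<lambda>s. F s $ i $ j) has_real_derivative F' $ i $ j) (at t)" for i j
    by (rule has_vector_derivative_matrix_entry[OF assms])
  hence "((\<lambda>s. F s $ 1 $ 1 * F s $ 2 $ 2 - F s $ 1 $ 2 * F s $ 2 $ 1) has_real_derivative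
      F t $ 1 $ 1 * F' $ 2 $ 2 + F' $ 1 $ 1 * F t $ 2 $ 2 - (F t $ 1 $ 2 * F' $ 2 $ 1 + F' $ 1 $ 2 * F t $ 2 $ 1))
      (at t)"
    by (intro DERIV_diff DERIV_mult')
  thus ?thesis
    by (simp add: det_2 trace2_def matrix_mult_2_entry adj2_entries algebra_simps)
qed

definition dir_deriv_mat :: "'a::euclidean_space \<Rightarrow> ('a \<Rightarrow> real^2^2) \<Rightarrow> 'a \<Rightarrow> real^2^2" where
  "dir_deriv_mat v F y = (\<chi> i j. dir_deriv v (\<lambda>z. F z $ i $ j) y)"

lemma analytic_mat_dir_deriv_mat:
  "analytic_mat F \<Longrightarrow> analytic_mat (dir_deriv_mat v F)"
  unfolding analytic_mat_def dir_deriv_mat_def by (simp add: real_analytic_dir_deriv)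

lemma periodic_coord_dir_deriv_mat:
  assumes "periodic_coord p F"
  shows "periodic_coord p (dir_deriv_mat v F)"
proof -
  have "periodic_coord p (\<lambda>z. F z $ i $ j)" for i j
    using assms by (simp add: periodic_coord_def)
  hence "periodic_coord p (dir_deriv v (\<lambda>z. F z $ i $ j))" for i j
    by (rule periodic_coord_dir_deriv)
  thus ?thesis by (simp add: periodic_coord_def dir_deriv_mat_def)
qed

lemma has_vector_derivative_dir_deriv_mat:
  assumes "analytic_mat F"
  shows "((\<lambda>s. F (z + s *\<^sub>R v)) has_vector_derivative dir_deriv_mat v F (z + t *\<^sub>R v)) (at t)"
  using assms unfolding analytic_mat_def
  by (auto intro!: has_vector_derivative_matrixI has_real_derivative_dir_deriv simp: dir_deriv_mat_def)

section \<open>Gauge transformations of quasi-periodic systems\<close>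

lemma trace2_gauge_generator:
  assumes B: "analytic_mat B" "\<forall>x. det (B x) = 1" and M: "trace2 M = 0"
  shows "trace2 (adj2 (dir_deriv_mat v B y) ** B y + adj2 (B y) ** M ** B y) = 0"
proof -
  have "((\<lambda>s. det (B (y + s *\<^sub>R v))) has_real_derivative trace2 (adj2 (dir_deriv_mat v B y) ** B y)) (at 0)"
    using has_real_derivative_det2[OF has_vector_derivative_dir_deriv_mat[OF B(1), of y v 0]] by simp
  moreover have "((\<lambda>s. det (B (y + s *\<^sub>R v))) has_real_derivative 0) (at 0)"
    using B(2) by simp
  ultimately have "trace2 (adj2 (dir_deriv_mat v B y) ** B y) = 0" by (rule DERIV_unique)
  moreover have "trace2 (adj2 (B y) ** M ** B y) = trace2 M"
    using adj2_inverse[of "B y"] B(2)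
    by (simp add: trace2_eq_trace trace_mul_sym[of _ "B y"] matrix_mul_assoc)
  ultimately show ?thesis using M by (simp add: trace2_eq_trace trace_add)
qed

lemma has_vector_derivative_gauge:
  fixes B :: "'a::euclidean_space \<Rightarrow> real^2^2" and y v :: 'a
  assumes B: "analytic_mat B" "\<forall>x. det (B x) = 1"
    and \<Phi>: "(\<Phi> has_vector_derivative M ** \<Phi> t) (at t)"
  defines "z \<equiv> y + t *\<^sub>R v"
  shows "((\<lambda>s. adj2 (B (y + s *\<^sub>R v)) ** \<Phi> s ** C) has_vector_derivative
          (adj2 (dir_deriv_mat v B z) ** B z + adj2 (B z) ** M ** B z) ** (adj2 (B z) ** \<Phi> t ** C)) (at t)"
proof -
  have "((\<lambda>s. adj2 (B (y + s *\<^sub>R v))) has_vector_derivative adj2 (dir_deriv_mat v B z)) (at t)"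
    unfolding z_def by (rule has_vector_derivative_adj2[OF has_vector_derivative_dir_deriv_mat[OF B(1)]])
  moreover have "((\<lambda>s. \<Phi> s ** C) has_vector_derivative M ** \<Phi> t ** C) (at t)"
    using has_vector_derivative_matrix_mult[OF \<Phi> has_vector_derivative_const[of C]] by simp
  ultimately have "((\<lambda>s. adj2 (B (y + s *\<^sub>R v)) ** (\<Phi> s ** C)) has_vector_derivative
      adj2 (B z) ** (M ** \<Phi> t ** C) + adj2 (dir_deriv_mat v B z) ** (\<Phi> t ** C)) (at t)"
    unfolding z_def by (rule has_vector_derivative_matrix_mult)
  moreover have "X ** B z ** adj2 (B z) = X" for X :: "real^2^2"
    using adj2_inverse B(2) by (simp flip: matrix_mul_assoc)
  ultimately show ?thesis
    by (simp add: matrix_add_rdistrib matrix_mul_assoc add.commute)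
qed

lemma embeddable_gauge_transform:
  fixes \<mu> :: "real^'n" and F F' B :: "real^'n \<Rightarrow> real^2^2"
  assumes "embeddable \<mu> F'"
    and B: "analytic_mat B" "periodic_coord 2 B" "\<forall>x. det (B x) = 1"
    and F: "\<forall>x. F x = adj2 (B (x + \<mu>)) ** F' x ** B x"
  shows "embeddable \<mu> F"
proof -
  obtain A' :: "real \<times> (real^'n) \<Rightarrow> real^2^2" and \<Phi>' :: "real \<Rightarrow> real \<times> (real^'n) \<Rightarrow> real^2^2"
    where A': "analytic_mat A'" "periodic_coord 2 A'" "\<forall>\<theta>. trace2 (A' \<theta>) = 0"
      and \<Phi>': "\<forall>\<theta>. \<Phi>' 0 \<theta> = mat 1"
        "\<forall>\<theta> t. ((\<lambda>s. \<Phi>' s \<theta>) has_vector_derivative A' (\<theta> + t *\<^sub>R (1, \<mu>)) ** \<Phi>' t \<theta>) (at t)"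
        "\<forall>\<theta>'. \<Phi>' 1 (0, \<theta>') = F' \<theta>'"
    using assms(1) unfolding embeddable_def by blast
  define A where "A p = adj2 (dir_deriv_mat \<mu> B (snd p)) ** B (snd p) + adj2 (B (snd p)) ** A' p ** B (snd p)"
    for p :: "real \<times> (real^'n)"
  define \<Phi> where "\<Phi> t \<theta> = adj2 (B (snd \<theta> + t *\<^sub>R \<mu>)) ** \<Phi>' t \<theta> ** B (snd \<theta>)"
    for t and \<theta> :: "real \<times> (real^'n)"
  have "analytic_mat A"
    unfolding A_def using A'(1) B(1)
    by (intro analytic_mat_add analytic_mat_mult analytic_mat_snd analytic_mat_adj2
        analytic_mat_dir_deriv_mat)
  moreover have "periodic_coord 2 A"
    unfolding periodic_coord_def
  proof (intro allI ballI)
    fix p b :: "real \<times> (real^'n)" assume "b \<in> Basis"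
    moreover note A'(2) periodic_coord_snd[OF B(2)] periodic_coord_snd[OF periodic_coord_dir_deriv_mat[OF B(2)]]
    ultimately have "A' (p + 2 *\<^sub>R b) = A' p" "B (snd (p + 2 *\<^sub>R b)) = B (snd p)"
      "dir_deriv_mat \<mu> B (snd (p + 2 *\<^sub>R b)) = dir_deriv_mat \<mu> B (snd p)"
      unfolding periodic_coord_def by blast+
    thus "A (p + 2 *\<^sub>R b) = A p" unfolding A_def by (simp only:)
  qed
  moreover have "trace2 (A \<theta>) = 0" for \<theta>
    unfolding A_def by (rule trace2_gauge_generator[OF B(1,3) A'(3)[rule_format]])
  moreover have "\<Phi> 0 \<theta> = mat 1" for \<theta>
    using \<Phi>'(1)[rule_format, of \<theta>] adj2_inverse B(3) by (simp add: \<Phi>_def)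
  moreover have "((\<lambda>s. \<Phi> s \<theta>) has_vector_derivative A (\<theta> + t *\<^sub>R (1, \<mu>)) ** \<Phi> t \<theta>) (at t)" for \<theta> t
    using has_vector_derivative_gauge[OF B(1,3) \<Phi>'(2)[rule_format, of \<theta> t], of "snd \<theta>" \<mu> "B (snd \<theta>)"]
    by (simp add: A_def \<Phi>_def matrix_mul_assoc)
  moreover have "\<Phi> 1 (0, \<theta>') = F \<theta>'" for \<theta>'
    using \<Phi>'(3) F by (simp add: \<Phi>_def)
  ultimately show ?thesis unfolding embeddable_def by blast
qed

theorem proposition1p1:
  fixes \<mu> :: "real^'n"
    and \<A> \<A>' B :: "real^'n \<Rightarrow> real^2^2"
  assumes "rat_indep_1 \<mu>"
    and "analytic_mat \<A>" and "periodic_coord 1 \<A>" and "\<forall>x. det (\<A> x) = 1"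
    and "analytic_mat B" and "periodic_coord 2 B" and "\<forall>x. det (B x) = 1"
    and "\<forall>x. B (x + \<mu>) ** \<A> x ** matrix_inv (B x) = \<A>' x"
    and "embeddable \<mu> \<A>'"
  shows "embeddable \<mu> \<A>"
proof (rule embeddable_gauge_transform[OF assms(9,5,6,7)], intro allI)
  fix x
  have "\<A>' x = B (x + \<mu>) ** \<A> x ** adj2 (B x)"
    using assms(7,8) by (simp add: matrix_inv_eq_adj2)
  hence "adj2 (B (x + \<mu>)) ** \<A>' x ** B x
      = (adj2 (B (x + \<mu>)) ** B (x + \<mu>)) ** \<A> x ** (adj2 (B x) ** B x)"
    by (simp add: matrix_mul_assoc)
  thus "\<A> x = adj2 (B (x + \<mu>)) ** \<A>' x ** B x"
    using adj2_inverse assms(7) by simp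
qed

end
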